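(* Let $S$ be a finite alphabet, $X = S^{\mathbb{Z}}$ the full shift, and $f : X \to X$ a cellular automaton. Then the language of the nonwandering set $\mathcal{N}(f)$ is a $\Sigma^1_1$ set.
   Context: A cellular automaton on $X = S^{\mathbb{Z}}$ (product topology) is a continuous shift-commuting map $f: X \to X$. The nonwandering set of $f$ is $\mathcal{N}(f) = \{x \in X \mid x \in \bigcap_{n \in \mathbb{N}} \overline{\bigcup_{k \geq n} \{f^k(x)\}}\}$, i.e. the set of configurations that are limit points of their own orbit. The language of $Y \subseteq S^{\mathbb{Z}}$ is the set of words $w \in S^*$ with $w = y_{[0,k-1]}$ for some $y\in Y$, $k \in \mathbb{N}$, viewed as a subset of $\mathbb{N}$ via a computable bijection. A set $P \subseteq \mathbb{N}$ is $\Sigma^1_1$ if $w \in P \iff (\exists C \subseteq \mathbb{N})(\forall m \in \mathbb{N})(\exists \ell \in \mathbb{N}) R(C,m,\ell,w)$ for some recursive predicate $R$. *)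

theory Defs
  imports "HOL-Analysis.Analysis" "HOL-Library.Nat_Bijection"
begin

text \<open>Configurations are maps int => nat; the full shift over the finite alphabet
  S = {0..<k} is the set below, carrying the subspace topology of the product
  topology on int => nat (nat discrete).\<close>

definition full_shift :: "nat \<Rightarrow> (int \<Rightarrow> nat) set" where
  "full_shift k = {x. \<forall>i. x i < k}"

definition shift :: "(int \<Rightarrow> nat) \<Rightarrow> (int \<Rightarrow> nat)" where
  "shift x = (\<lambda>i. x (i + 1))"

definition cellular_automaton :: "nat \<Rightarrow> ((int \<Rightarrow> nat) \<Rightarrow> (int \<Rightarrow> nat)) \<Rightarrow> bool" where
  "cellular_automaton k f \<longleftrightarrow>
     f ` full_shift k \<subseteq> full_shift k \<and>
     continuous_on (full_shift k) f \<and>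
     (\<forall>x \<in> full_shift k. f (shift x) = shift (f x))"

definition nonwandering :: "nat \<Rightarrow> ((int \<Rightarrow> nat) \<Rightarrow> (int \<Rightarrow> nat)) \<Rightarrow> (int \<Rightarrow> nat) set" where
  "nonwandering k f =
     {x \<in> full_shift k. \<forall>n. x \<in> closure ((\<lambda>j. (f ^^ j) x) ` {n..})}"

definition language :: "(int \<Rightarrow> nat) set \<Rightarrow> nat list set" where
  "language Y = {w. \<exists>y\<in>Y. \<exists>m. w = map (\<lambda>i. y (int i)) [0..<m]}"

text \<open>Words are viewed as natural numbers via the computable bijection list_encode.\<close>
definition language_code :: "(int \<Rightarrow> nat) set \<Rightarrow> nat set" where
  "language_code Y = list_encode ` language Y"

datatype recf = Zr | Sc | Proj nat | Comp recf "recf list" | Prec recf recf | Mn recf | Orc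

inductive rec_eval :: "nat set \<Rightarrow> recf \<Rightarrow> nat list \<Rightarrow> nat \<Rightarrow> bool" for C where
  zero: "rec_eval C Zr xs 0"
| succ: "rec_eval C Sc (x # xs) (Suc x)"
| proj: "i < length xs \<Longrightarrow> rec_eval C (Proj i) xs (xs ! i)"
| comp: "list_all2 (\<lambda>g y. rec_eval C g xs y) gs ys \<Longrightarrow> rec_eval C f ys z
          \<Longrightarrow> rec_eval C (Comp f gs) xs z"
| prec0: "rec_eval C f xs z \<Longrightarrow> rec_eval C (Prec f g) (0 # xs) z"
| precS: "rec_eval C (Prec f g) (n # xs) z \<Longrightarrow> rec_eval C g (z # n # xs) y
          \<Longrightarrow> rec_eval C (Prec f g) (Suc n # xs) y"
| mn: "rec_eval C f (n # xs) 0 \<Longrightarrow> (\<forall>i<n. \<exists>y. 0 < y \<and> rec_eval C f (i # xs) y)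
          \<Longrightarrow> rec_eval C (Mn f) xs n"
| orc: "rec_eval C Orc (x # xs) (if x \<in> C then 1 else 0)"

definition recursive_pred :: "(nat set \<Rightarrow> nat \<Rightarrow> nat \<Rightarrow> nat \<Rightarrow> bool) \<Rightarrow> bool" where
  "recursive_pred R \<longleftrightarrow> (\<exists>r. \<forall>C m l w.
      (R C m l w \<longrightarrow> rec_eval C r [m, l, w] 0) \<and>
      (\<not> R C m l w \<longrightarrow> rec_eval C r [m, l, w] 1))"

definition sigma11 :: "nat set \<Rightarrow> bool" where
  "sigma11 P \<longleftrightarrow> (\<exists>R. recursive_pred R \<and>
      (\<forall>w. w \<in> P \<longleftrightarrow> (\<exists>C. \<forall>m. \<exists>l. R C m l w)))"

end

theory Submission
  imports Defs
begin

text \<open>A word w lies in the language of the nonwandering set iff there is a certificate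
  T : nat \<Rightarrow> nat recording the space-time diagram y_j = f^j(x) of a configuration x with prefix w,
  the windows on which the local rule acts, the codes of the suffixes of w, and for all n, r a
  return time j \<ge> n at which y_j agrees with x on [-r, r]. As f has a finite radius
  (Curtis-Hedlund-Lyndon), every requirement on T is a finite check. Coding T by its graph C,
  "C is the graph of a total function satisfying all checks" takes the form
  \<forall>m. \<exists>l. R C m l w, where m selects a check with its arguments, l supplies the values of T the
  check looks up, and R is decided by a single oracle program.\<close>

section \<open>Oracle programs\<close>

definition computes :: "nat \<Rightarrow> recf \<Rightarrow> (nat set \<Rightarrow> nat list \<Rightarrow> nat) \<Rightarrow> bool" where
  "computes n r g \<longleftrightarrow> (\<forall>C xs. length xs = n \<longrightarrow> rec_eval C r xs (g C xs))"

definition decides :: "nat \<Rightarrow> recf \<Rightarrow> (nat set \<Rightarrow> nat list \<Rightarrow> bool) \<Rightarrow> bool" where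
  "decides n r P \<longleftrightarrow> computes n r (\<lambda>C xs. if P C xs then 0 else 1)"

lemma computesD: "computes n r g \<Longrightarrow> length xs = n \<Longrightarrow> rec_eval C r xs (g C xs)"
  by (simp add: computes_def)

lemma computes_cong:
  "computes n r g \<Longrightarrow> (\<And>C xs. length xs = n \<Longrightarrow> g C xs = g' C xs) \<Longrightarrow> computes n r g'"
  by (simp add: computes_def)

lemma decides_cong:
  "decides n r P \<Longrightarrow> (\<And>C xs. length xs = n \<Longrightarrow> P C xs = P' C xs) \<Longrightarrow> decides n r P'"
  unfolding decides_def by (erule computes_cong) simp

lemma decides_imp_recursive_pred:
  assumes "decides 3 r (\<lambda>C xs. R C (xs ! 0) (xs ! 1) (xs ! 2))"
  shows "recursive_pred R"
  unfolding recursive_pred_def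
proof (intro exI allI)
  fix C m l w
  have "rec_eval C r [m, l, w] (if R C m l w then 0 else 1)"
    using computesD[OF assms[unfolded decides_def], of "[m, l, w]"] by simp
  then show "(R C m l w \<longrightarrow> rec_eval C r [m, l, w] 0) \<and> (\<not> R C m l w \<longrightarrow> rec_eval C r [m, l, w] 1)"
    by (cases "R C m l w") simp_all
qed

lemma computes_Zr: "computes n Zr (\<lambda>_ _. 0)"
  by (simp add: computes_def rec_eval.zero)

lemma computes_Proj: "i < n \<Longrightarrow> computes n (Proj i) (\<lambda>C xs. xs ! i)"
  by (simp add: computes_def rec_eval.proj)

lemma computes_Sc: "computes 1 Sc (\<lambda>C xs. Suc (xs ! 0))"
  unfolding computes_def by (auto simp: length_Suc_conv intro: rec_eval.succ)

lemma computes_Orc: "computes 1 Orc (\<lambda>C xs. if xs ! 0 \<in> C then 1 else 0)"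
  unfolding computes_def by (metis One_nat_def length_0_conv length_Suc_conv nth_Cons_0 rec_eval.orc)

lemma computes_Comp1:
  "computes n a ga \<Longrightarrow> computes 1 h gh \<Longrightarrow> computes n (Comp h [a]) (\<lambda>C xs. gh C [ga C xs])"
  unfolding computes_def by (auto intro!: rec_eval.comp[where ys = "[_]"])

lemma computes_Comp2:
  "computes n a ga \<Longrightarrow> computes n b gb \<Longrightarrow> computes 2 h gh \<Longrightarrow>
   computes n (Comp h [a, b]) (\<lambda>C xs. gh C [ga C xs, gb C xs])"
  unfolding computes_def by (auto intro!: rec_eval.comp[where ys = "[_, _]"])

lemma computes_unary:
  assumes "\<And>C x. rec_eval C r [x] (g x)"
  shows "computes 1 r (\<lambda>C xs. g (xs ! 0))"
  unfolding computes_def using assms by (auto simp: length_Suc_conv)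

lemma computes_binary:
  assumes "\<And>C x y. rec_eval C r [x, y] (g x y)"
  shows "computes 2 r (\<lambda>C xs. g (xs ! 0) (xs ! 1))"
  unfolding computes_def using assms by (auto simp: length_Suc_conv numeral_2_eq_2)

lemma rec_eval_Prec:
  assumes "rec_eval C f xs (g 0)"
    and "\<And>n. rec_eval C h (g n # n # xs) (g (Suc n))"
  shows "rec_eval C (Prec f h) (n # xs) (g n)"
  by (induction n) (auto intro: rec_eval.prec0 rec_eval.precS assms)

primrec ConstP :: "nat \<Rightarrow> recf" where
  "ConstP 0 = Zr"
| "ConstP (Suc c) = Comp Sc [ConstP c]"

definition SucP :: "recf \<Rightarrow> recf" where "SucP a = Comp Sc [a]"

lemma computes_ConstP: "computes n (ConstP c) (\<lambda>_ _. c)"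
  by (induction c) (auto simp: computes_Zr dest: computes_Comp1[OF _ computes_Sc])

lemma computes_SucP: "computes n a g \<Longrightarrow> computes n (SucP a) (\<lambda>C xs. Suc (g C xs))"
  unfolding SucP_def using computes_Comp1[OF _ computes_Sc] by fastforce

definition add_rec :: recf where "add_rec = Prec (Proj 0) (SucP (Proj 0))"
definition pred_rec :: recf where "pred_rec = Prec Zr (Proj 1)"
definition monus_rec :: recf where "monus_rec = Prec (Proj 0) (Comp pred_rec [Proj 0])"
definition triangle_rec :: recf where "triangle_rec = Prec Zr (Comp add_rec [Proj 0, SucP (Proj 1)])"

lemma rec_eval_ProjI: "i < length xs \<Longrightarrow> v = xs ! i \<Longrightarrow> rec_eval C (Proj i) xs v"
  by (simp add: rec_eval.proj)

lemma rec_eval_SucP_Proj0: "rec_eval C (SucP (Proj 0)) (x # xs) (Suc x)"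
  unfolding SucP_def
  by (rule rec_eval.comp[where ys = "[x]"]) (auto intro: rec_eval.succ rec_eval_ProjI)

lemma rec_eval_add_rec: "rec_eval C add_rec [n, x] (n + x)"
  unfolding add_rec_def
  by (rule rec_eval_Prec[where g = "\<lambda>n. n + x"]) (auto intro: rec_eval_ProjI rec_eval_SucP_Proj0)

lemma rec_eval_pred_rec: "rec_eval C pred_rec [n] (n - 1)"
  unfolding pred_rec_def
  by (rule rec_eval_Prec[where g = "\<lambda>n. n - 1"]) (auto intro: rec_eval.zero rec_eval_ProjI)

lemma rec_eval_monus_rec: "rec_eval C monus_rec [n, x] (x - n)"
proof -
  have "rec_eval C (Comp pred_rec [Proj 0]) [x - n, n, x] (x - Suc n)" for n
    using rec_eval_pred_rec[of C "x - n"]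
    by (intro rec_eval.comp[where ys = "[x - n]"]) (auto intro: rec_eval_ProjI)
  then show ?thesis
    unfolding monus_rec_def by (intro rec_eval_Prec[where g = "\<lambda>n. x - n"]) (auto intro: rec_eval_ProjI)
qed

lemma rec_eval_triangle_rec: "rec_eval C triangle_rec [n] (triangle n)"
proof -
  have "rec_eval C (Comp add_rec [Proj 0, SucP (Proj 1)]) [triangle n, n] (triangle (Suc n))" for n
    using rec_eval_add_rec[of C "triangle n" "Suc n"] unfolding SucP_def
    by (intro rec_eval.comp[where ys = "[triangle n, Suc n]"])
      (auto intro!: rec_eval_ProjI rec_eval.comp[where ys = "[n]"] rec_eval.succ)
  then show ?thesis
    unfolding triangle_rec_def by (intro rec_eval_Prec[where g = triangle]) (auto intro: rec_eval.zero)
qed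

definition AddP :: "recf \<Rightarrow> recf \<Rightarrow> recf" where "AddP a b = Comp add_rec [a, b]"
definition SubP :: "recf \<Rightarrow> recf \<Rightarrow> recf" where "SubP a b = Comp monus_rec [b, a]"
definition TriP :: "recf \<Rightarrow> recf" where "TriP a = Comp triangle_rec [a]"

lemma computes_AddP:
  "computes n a ga \<Longrightarrow> computes n b gb \<Longrightarrow> computes n (AddP a b) (\<lambda>C xs. ga C xs + gb C xs)"
  unfolding AddP_def using computes_Comp2[OF _ _ computes_binary[OF rec_eval_add_rec]] by fastforce

lemma computes_SubP:
  "computes n a ga \<Longrightarrow> computes n b gb \<Longrightarrow> computes n (SubP a b) (\<lambda>C xs. ga C xs - gb C xs)"
  unfolding SubP_def using computes_Comp2[OF _ _ computes_binary[OF rec_eval_monus_rec]] by fastforce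

lemma computes_TriP: "computes n a g \<Longrightarrow> computes n (TriP a) (\<lambda>C xs. triangle (g C xs))"
  unfolding TriP_def using computes_Comp1[OF _ computes_unary[OF rec_eval_triangle_rec]] by fastforce

definition NotP :: "recf \<Rightarrow> recf" where "NotP a = SubP (ConstP 1) a"
definition AndP :: "recf \<Rightarrow> recf \<Rightarrow> recf" where "AndP a b = NotP (NotP (AddP a b))"
definition OrP :: "recf \<Rightarrow> recf \<Rightarrow> recf" where "OrP a b = NotP (AndP (NotP a) (NotP b))"
definition ImpP :: "recf \<Rightarrow> recf \<Rightarrow> recf" where "ImpP a b = OrP (NotP a) b"
definition LeP :: "recf \<Rightarrow> recf \<Rightarrow> recf" where "LeP a b = NotP (NotP (SubP a b))"
definition EqP :: "recf \<Rightarrow> recf \<Rightarrow> recf" where "EqP a b = AndP (LeP a b) (LeP b a)"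
definition MemP :: "recf \<Rightarrow> recf" where "MemP a = NotP (Comp Orc [a])"

primrec InListP :: "nat list \<Rightarrow> recf \<Rightarrow> recf" where
  "InListP [] a = NotP (ConstP 0)"
| "InListP (c # cs) a = OrP (EqP a (ConstP c)) (InListP cs a)"

lemma computes_NotP: "computes n a g \<Longrightarrow> computes n (NotP a) (\<lambda>C xs. 1 - g C xs)"
  unfolding NotP_def by (rule computes_SubP[OF computes_ConstP])

lemma decides_NotP: "decides n a P \<Longrightarrow> decides n (NotP a) (\<lambda>C xs. \<not> P C xs)"
  unfolding decides_def by (rule computes_cong[OF computes_NotP]) auto

lemma decides_AndP:
  "decides n a P \<Longrightarrow> decides n b Q \<Longrightarrow> decides n (AndP a b) (\<lambda>C xs. P C xs \<and> Q C xs)"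
  unfolding decides_def AndP_def
  by (rule computes_cong[OF computes_NotP[OF computes_NotP[OF computes_AddP]]]) auto

lemma decides_OrP:
  "decides n a P \<Longrightarrow> decides n b Q \<Longrightarrow> decides n (OrP a b) (\<lambda>C xs. P C xs \<or> Q C xs)"
  unfolding OrP_def by (rule decides_cong[OF decides_NotP[OF decides_AndP[OF decides_NotP decides_NotP]]]) auto

lemma decides_ImpP:
  "decides n a P \<Longrightarrow> decides n b Q \<Longrightarrow> decides n (ImpP a b) (\<lambda>C xs. P C xs \<longrightarrow> Q C xs)"
  unfolding ImpP_def by (rule decides_cong[OF decides_OrP[OF decides_NotP]]) auto

lemma decides_LeP:
  "computes n a ga \<Longrightarrow> computes n b gb \<Longrightarrow> decides n (LeP a b) (\<lambda>C xs. ga C xs \<le> gb C xs)"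
  unfolding decides_def LeP_def
  by (rule computes_cong[OF computes_NotP[OF computes_NotP[OF computes_SubP]]]) auto

lemma decides_EqP:
  "computes n a ga \<Longrightarrow> computes n b gb \<Longrightarrow> decides n (EqP a b) (\<lambda>C xs. ga C xs = gb C xs)"
  unfolding EqP_def by (rule decides_cong[OF decides_AndP[OF decides_LeP decides_LeP]]) auto

lemma decides_MemP: "computes n a g \<Longrightarrow> decides n (MemP a) (\<lambda>C xs. g C xs \<in> C)"
  unfolding decides_def MemP_def
  by (rule computes_cong[OF computes_NotP[OF computes_Comp1[OF _ computes_Orc]]]) auto

lemma decides_InListP: "computes n a g \<Longrightarrow> decides n (InListP cs a) (\<lambda>C xs. g C xs \<in> set cs)"
proof (induction cs)
  case Nil
  show ?case
    unfolding decides_def InListP.simps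
    by (rule computes_cong[OF computes_NotP[OF computes_ConstP]]) simp
next
  case (Cons c cs)
  show ?case
    using decides_OrP[OF decides_EqP[OF Cons.prems computes_ConstP] Cons.IH[OF Cons.prems]] by simp
qed

lemma triangle_Suc_gt: "m < triangle (Suc m)"
  by (induction m) auto

definition diagonal_rec :: recf where
  "diagonal_rec = Mn (LeP (SucP (Proj 1)) (TriP (SucP (Proj 0))))"

definition diagonal :: "nat \<Rightarrow> nat" where
  "diagonal m = (LEAST s. m < triangle (Suc s))"

lemma diagonal_bounds: "triangle (diagonal m) \<le> m" "m < triangle (Suc (diagonal m))"
proof -
  show "m < triangle (Suc (diagonal m))"
    unfolding diagonal_def by (rule LeastI[of _ m]) (rule triangle_Suc_gt)
  show "triangle (diagonal m) \<le> m"
  proof (cases "diagonal m")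
    case (Suc s)
    then have "\<not> m < triangle (Suc s)"
      unfolding diagonal_def by (metis lessI not_less_Least)
    then show ?thesis using Suc by simp
  qed simp
qed

lemma prod_decode_diagonal:
  "prod_decode m = (m - triangle (diagonal m), diagonal m - (m - triangle (diagonal m)))"
proof -
  have "prod_encode (m - triangle (diagonal m), diagonal m - (m - triangle (diagonal m))) = m"
    using diagonal_bounds[of m] by (simp add: prod_encode_def)
  then show ?thesis by (metis prod_encode_inverse)
qed

lemma computes_diagonal_rec: "computes 1 diagonal_rec (\<lambda>C xs. diagonal (xs ! 0))"
proof (rule computes_unary)
  fix C m
  have "decides 2 (LeP (SucP (Proj 1)) (TriP (SucP (Proj 0))))
      (\<lambda>C xs. Suc (xs ! 1) \<le> triangle (Suc (xs ! 0)))"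
    by (intro decides_LeP computes_SucP computes_TriP computes_Proj) simp_all
  from computesD[OF this[unfolded decides_def], of "[s, m]" C for s]
  have test: "rec_eval C (LeP (SucP (Proj 1)) (TriP (SucP (Proj 0)))) [s, m]
      (if m < triangle (Suc s) then 0 else 1)" for s
    by (simp add: Suc_le_eq)
  show "rec_eval C diagonal_rec [m] (diagonal m)"
    unfolding diagonal_rec_def
  proof (rule rec_eval.mn)
    show "rec_eval C (LeP (SucP (Proj 1)) (TriP (SucP (Proj 0)))) [diagonal m, m] 0"
      using test[of "diagonal m"] diagonal_bounds(2)[of m] by (simp del: triangle_Suc)
    show "\<forall>i<diagonal m. \<exists>y>0. rec_eval C (LeP (SucP (Proj 1)) (TriP (SucP (Proj 0)))) [i, m] y"
    proof (intro allI impI exI conjI)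
      fix i assume "i < diagonal m"
      then have "\<not> m < triangle (Suc i)"
        unfolding diagonal_def by (rule not_less_Least)
      then show "rec_eval C (LeP (SucP (Proj 1)) (TriP (SucP (Proj 0)))) [i, m] 1"
        using test[of i] by (simp del: triangle_Suc)
    qed simp
  qed
qed

definition FstP :: "recf \<Rightarrow> recf" where
  "FstP a = SubP a (TriP (Comp diagonal_rec [a]))"
definition SndP :: "recf \<Rightarrow> recf" where
  "SndP a = SubP (Comp diagonal_rec [a]) (FstP a)"
definition PairP :: "recf \<Rightarrow> recf \<Rightarrow> recf" where
  "PairP a b = AddP (TriP (AddP a b)) a"

lemma computes_FstP: "computes n a g \<Longrightarrow> computes n (FstP a) (\<lambda>C xs. fst (prod_decode (g C xs)))"
  unfolding FstP_def
  by (rule computes_cong[OF computes_SubP[OF _ computes_TriP[OF computes_Comp1[OF _ computes_diagonal_rec]]]])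
    (auto simp: prod_decode_diagonal[of "g C xs" for C xs])

lemma computes_SndP: "computes n a g \<Longrightarrow> computes n (SndP a) (\<lambda>C xs. snd (prod_decode (g C xs)))"
  unfolding SndP_def FstP_def
  by (rule computes_cong[OF computes_SubP[OF computes_Comp1[OF _ computes_diagonal_rec]
        computes_SubP[OF _ computes_TriP[OF computes_Comp1[OF _ computes_diagonal_rec]]]]])
    (auto simp: prod_decode_diagonal[of "g C xs" for C xs])

lemma computes_PairP:
  "computes n a ga \<Longrightarrow> computes n b gb \<Longrightarrow> computes n (PairP a b) (\<lambda>C xs. prod_encode (ga C xs, gb C xs))"
  unfolding PairP_def
  by (rule computes_cong[OF computes_AddP[OF computes_TriP[OF computes_AddP]]]) (auto simp: prod_encode_def)

primrec tuple :: "nat list \<Rightarrow> nat" where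
  "tuple [] = 0"
| "tuple (x # xs) = prod_encode (x, tuple xs)"

declare tuple.simps [simp del] \<comment> \<open>so that arg_tuple, not unfolding, evaluates projections of tuples\<close>

definition arg :: "nat \<Rightarrow> nat \<Rightarrow> nat" where
  "arg i m = fst (prod_decode (((snd \<circ> prod_decode) ^^ i) m))"

lemma arg_tuple [simp]: "i < length xs \<Longrightarrow> arg i (tuple xs) = xs ! i"
  by (induction xs arbitrary: i)
    (auto simp: arg_def tuple.simps funpow_Suc_right less_Suc_eq_0_disj simp del: funpow.simps)

primrec TupleP :: "recf list \<Rightarrow> recf" where
  "TupleP [] = ConstP 0"
| "TupleP (p # ps) = PairP p (TupleP ps)"

definition ArgP :: "nat \<Rightarrow> recf \<Rightarrow> recf" where
  "ArgP i a = FstP ((SndP ^^ i) a)"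

lemma computes_TupleP_Nil: "computes n (TupleP []) (\<lambda>C xs. tuple [])"
  by (simp add: computes_Zr tuple.simps)

lemma computes_TupleP_Cons:
  "computes n p g \<Longrightarrow> computes n (TupleP ps) (\<lambda>C xs. tuple (gs C xs)) \<Longrightarrow>
   computes n (TupleP (p # ps)) (\<lambda>C xs. tuple (g C xs # gs C xs))"
  by (simp add: computes_PairP tuple.simps)

lemma computes_ArgP: "computes n a g \<Longrightarrow> computes n (ArgP i a) (\<lambda>C xs. arg i (g C xs))"
proof -
  assume a: "computes n a g"
  have "computes n ((SndP ^^ i) a) (\<lambda>C xs. ((snd \<circ> prod_decode) ^^ i) (g C xs))"
    by (induction i) (simp_all add: a computes_SndP)
  then show ?thesis
    unfolding ArgP_def arg_def by (rule computes_FstP)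
qed

section \<open>Cylinders and the radius of a cellular automaton\<close>

definition cylinder :: "(int \<Rightarrow> nat) \<Rightarrow> nat \<Rightarrow> (int \<Rightarrow> nat) set" where
  "cylinder x r = {y. \<forall>d. \<bar>d\<bar> \<le> int r \<longrightarrow> y d = x d}"

lemma self_in_cylinder: "x \<in> cylinder x r"
  by (simp add: cylinder_def)

lemma open_cylinder: "open (cylinder x r)"
proof -
  have "cylinder x r = Pi\<^sub>E UNIV (\<lambda>d. if \<bar>d\<bar> \<le> int r then {x d} else UNIV)"
    unfolding cylinder_def PiE_def Pi_def by auto
  moreover have "finite {d. (if \<bar>d\<bar> \<le> int r then {x d} else UNIV) \<noteq> UNIV}"
    by (rule finite_subset[of _ "{- int r .. int r}"]) auto
  ultimately show ?thesis
    by (simp add: open_PiE open_discrete)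
qed

lemma open_contains_cylinder:
  assumes "open U" "x \<in> U"
  shows "\<exists>r. cylinder x r \<subseteq> U"
proof -
  obtain V where V: "finite {i. V i \<noteq> UNIV}" "x \<in> Pi\<^sub>E UNIV V" "Pi\<^sub>E UNIV V \<subseteq> U"
    using assms unfolding open_fun_def openin_product_topology_alt by auto
  define r where "r = Max (insert 0 ((\<lambda>i. nat \<bar>i\<bar>) ` {i. V i \<noteq> UNIV}))"
  have bound: "\<bar>i\<bar> \<le> int r" if "V i \<noteq> UNIV" for i
  proof -
    have "nat \<bar>i\<bar> \<le> r"
      unfolding r_def using that V(1) by (intro Max_ge) auto
    then show ?thesis by simp
  qed
  have "cylinder x r \<subseteq> Pi\<^sub>E UNIV V"
  proof
    fix y assume y: "y \<in> cylinder x r"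
    have "y i \<in> V i" for i
      using y V(2) bound[of i] unfolding cylinder_def PiE_iff by (cases "V i = UNIV") auto
    then show "y \<in> Pi\<^sub>E UNIV V" by (simp add: PiE_iff)
  qed
  with V(3) show ?thesis by blast
qed

lemma closure_iff_cylinders:
  fixes A :: "(int \<Rightarrow> nat) set"
  shows "x \<in> closure A \<longleftrightarrow> (\<forall>r. \<exists>y\<in>A. \<forall>d. \<bar>d\<bar> \<le> int r \<longrightarrow> y d = x d)"
proof
  assume x: "x \<in> closure A"
  show "\<forall>r. \<exists>y\<in>A. \<forall>d. \<bar>d\<bar> \<le> int r \<longrightarrow> y d = x d"
  proof
    fix r
    have "cylinder x r \<inter> A \<noteq> {}"
      using x self_in_cylinder open_Int_closure_eq_empty[OF open_cylinder] by blast
    then show "\<exists>y\<in>A. \<forall>d. \<bar>d\<bar> \<le> int r \<longrightarrow> y d = x d"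
      unfolding cylinder_def by blast
  qed
next
  assume "\<forall>r. \<exists>y\<in>A. \<forall>d. \<bar>d\<bar> \<le> int r \<longrightarrow> y d = x d"
  then have meets: "cylinder x r \<inter> A \<noteq> {}" for r
    unfolding cylinder_def by blast
  show "x \<in> closure A"
    unfolding closure_iff_nhds_not_empty
  proof (intro allI impI)
    fix B S assume "S \<subseteq> B" "open S" "x \<in> S"
    then obtain r where "cylinder x r \<subseteq> S"
      using open_contains_cylinder by blast
    then show "A \<inter> B \<noteq> {}"
      using \<open>S \<subseteq> B\<close> meets[of r] by blast
  qed
qed

lemma compact_full_shift: "compact (full_shift k)"
proof -
  have "full_shift k = Pi\<^sub>E UNIV (\<lambda>_. {..<k})"
    unfolding full_shift_def PiE_def Pi_def by auto
  moreover have "compactin (product_topology (\<lambda>_. euclidean) UNIV) (Pi\<^sub>E UNIV (\<lambda>_::int. {..<k}))"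
    by (simp add: compactin_PiE finite_imp_compact)
  ultimately show ?thesis
    by (simp add: euclidean_product_topology)
qed

lemma nonwandering_iff:
  "x \<in> nonwandering k f \<longleftrightarrow>
    x \<in> full_shift k \<and> (\<forall>n r. \<exists>j\<ge>n. \<forall>d. \<bar>d\<bar> \<le> int r \<longrightarrow> (f ^^ j) x d = x d)"
  unfolding nonwandering_def closure_iff_cylinders by blast

definition shift_by :: "int \<Rightarrow> (int \<Rightarrow> nat) \<Rightarrow> (int \<Rightarrow> nat)" where
  "shift_by n x = (\<lambda>i. x (i + n))"

lemma shift_by_in_full_shift: "x \<in> full_shift k \<Longrightarrow> shift_by n x \<in> full_shift k"
  by (simp add: shift_by_def full_shift_def)

lemma shift_by_add: "shift_by a (shift_by b x) = shift_by (a + b) x"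
  by (simp add: shift_by_def ac_simps)

lemma shift_by_0 [simp]: "shift_by 0 x = x"
  by (simp add: shift_by_def)

lemma cellular_automaton_shift_by_nat:
  assumes ca: "cellular_automaton k f" and x: "x \<in> full_shift k"
  shows "f (shift_by (int n) x) = shift_by (int n) (f x)"
proof (induction n)
  case (Suc n)
  have shift_Suc: "shift_by (int (Suc n)) z = shift (shift_by (int n) z)" for z
    by (simp add: shift_def shift_by_def ac_simps)
  show ?case
    using ca shift_by_in_full_shift[OF x] Suc unfolding shift_Suc cellular_automaton_def by simp
qed simp

lemma cellular_automaton_shift_by:
  assumes ca: "cellular_automaton k f" and x: "x \<in> full_shift k"
  shows "f (shift_by n x) = shift_by n (f x)"
proof (cases "0 \<le> n")
  case True
  then show ?thesis
    using cellular_automaton_shift_by_nat[OF assms, of "nat n"] by simp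
next
  case False
  define m where "m = nat (- n)"
  then have n: "n = - int m"
    using False by simp
  have "f x = f (shift_by (int m) (shift_by n x))"
    by (simp add: shift_by_add n)
  also have "\<dots> = shift_by (int m) (f (shift_by n x))"
    by (rule cellular_automaton_shift_by_nat[OF ca shift_by_in_full_shift[OF x]])
  finally show ?thesis
    by (simp add: shift_by_add n)
qed

lemma cellular_automaton_apply:
  assumes "cellular_automaton k f" and "x \<in> full_shift k"
  shows "f x i = f (shift_by i x) 0"
proof -
  have "f (shift_by i x) 0 = shift_by i (f x) 0"
    using cellular_automaton_shift_by[OF assms] by simp
  then show ?thesis
    by (simp add: shift_by_def)
qed

definition has_radius :: "nat \<Rightarrow> ((int \<Rightarrow> nat) \<Rightarrow> (int \<Rightarrow> nat)) \<Rightarrow> nat \<Rightarrow> bool" where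
  "has_radius k f \<rho> \<longleftrightarrow> (\<forall>y\<in>full_shift k. \<forall>z\<in>full_shift k. \<forall>i.
     (\<forall>d. \<bar>d\<bar> \<le> int \<rho> \<longrightarrow> y (i + d) = z (i + d)) \<longrightarrow> f y i = f z i)"

lemma cellular_automaton_locally_constant_at_0:
  assumes ca: "cellular_automaton k f" and x: "x \<in> full_shift k"
  shows "\<exists>r. \<forall>y\<in>full_shift k \<inter> cylinder x r. f y 0 = f x 0"
proof -
  have "continuous_on (full_shift k) (\<lambda>y. f y 0)"
    using ca unfolding cellular_automaton_def
    by (intro continuous_on_compose2[OF continuous_on_product_coordinates, of _ f, simplified]) auto
  then obtain A where A: "open A" "A \<inter> full_shift k = (\<lambda>y. f y 0) -` {f x 0} \<inter> full_shift k"
    unfolding continuous_on_open_invariant by (meson open_discrete)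
  moreover have "x \<in> A"
    using A(2) x by blast
  ultimately obtain r where r: "cylinder x r \<subseteq> A"
    using open_contains_cylinder by blast
  have "f y 0 = f x 0" if "y \<in> full_shift k \<inter> cylinder x r" for y
  proof -
    have "y \<in> A \<inter> full_shift k"
      using that r by blast
    then show ?thesis
      unfolding A(2) by simp
  qed
  then show ?thesis by blast
qed

text \<open>Curtis-Hedlund-Lyndon: finitely many cylinders on which the image cell 0 is constant
  cover the compact full shift; their largest radius works at every cell by shift invariance.\<close>

lemma cellular_automaton_has_radius:
  assumes ca: "cellular_automaton k f"
  shows "\<exists>\<rho>. has_radius k f \<rho>"
proof -
  have "\<forall>x\<in>full_shift k. \<exists>r. \<forall>y\<in>full_shift k \<inter> cylinder x r. f y 0 = f x 0"
    using cellular_automaton_locally_constant_at_0[OF ca] by blast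
  then obtain R where "\<forall>x\<in>full_shift k. \<forall>y\<in>full_shift k \<inter> cylinder x (R x). f y 0 = f x 0"
    by (rule bchoice[THEN exE])
  then have R: "f y 0 = f x 0" if "x \<in> full_shift k" "y \<in> full_shift k" "y \<in> cylinder x (R x)" for x y
    using that by blast
  have cover: "full_shift k \<subseteq> (\<Union>x\<in>full_shift k. cylinder x (R x))"
    using self_in_cylinder by blast
  obtain X where X: "X \<subseteq> full_shift k" "finite X" "full_shift k \<subseteq> (\<Union>x\<in>X. cylinder x (R x))"
    by (rule compactE_image[where f = "\<lambda>x. cylinder x (R x)", OF compact_full_shift open_cylinder cover])
  define \<rho> where "\<rho> = Max (insert 0 (R ` X))"
  have at_0: "f y 0 = f z 0"
    if y: "y \<in> full_shift k" and z: "z \<in> full_shift k" and agree: "\<forall>d. \<bar>d\<bar> \<le> int \<rho> \<longrightarrow> y d = z d" for y z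
  proof -
    obtain x where x: "x \<in> X" "y \<in> cylinder x (R x)"
      using X(3) y by blast
    have "R x \<le> \<rho>"
      unfolding \<rho>_def using x(1) X(2) by simp
    have "z d = x d" if d: "\<bar>d\<bar> \<le> int (R x)" for d
    proof -
      have "\<bar>d\<bar> \<le> int \<rho>"
        using d \<open>R x \<le> \<rho>\<close> by (meson of_nat_le_iff order_trans)
      then have "y d = z d"
        using agree by blast
      moreover have "y d = x d"
        using x(2) d unfolding cylinder_def by blast
      ultimately show ?thesis by simp
    qed
    then have "z \<in> cylinder x (R x)"
      unfolding cylinder_def by blast
    moreover have "x \<in> full_shift k"
      using X(1) x(1) by blast
    ultimately show ?thesis
      using R[of x y] R[of x z] y z x(2) by simp
  qed
  have "has_radius k f \<rho>"
    unfolding has_radius_def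
  proof (intro ballI allI impI)
    fix y z i assume y: "y \<in> full_shift k" and z: "z \<in> full_shift k"
      and agree: "\<forall>d. \<bar>d\<bar> \<le> int \<rho> \<longrightarrow> y (i + d) = z (i + d)"
    have "f (shift_by i y) 0 = f (shift_by i z) 0"
      using agree by (intro at_0 shift_by_in_full_shift y z) (simp add: shift_by_def add.commute)
    then show "f y i = f z i"
      using cellular_automaton_apply[OF ca y, of i] cellular_automaton_apply[OF ca z, of i] by simp
  qed
  then show ?thesis ..
qed

section \<open>Orbit certificates\<close>

definition cell_key :: "nat \<Rightarrow> nat \<Rightarrow> nat \<Rightarrow> nat" where
  "cell_key j a b = tuple [0, j, a, b]"

definition window_key :: "nat \<Rightarrow> nat \<Rightarrow> nat \<Rightarrow> nat \<Rightarrow> nat" where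
  "window_key j a b t = tuple [1, j, a, b, t]"

definition suffix_key :: "nat \<Rightarrow> nat" where
  "suffix_key i = tuple [2, i]"

definition return_key :: "nat \<Rightarrow> nat \<Rightarrow> nat" where
  "return_key n r = tuple [3, n, r]"

text \<open>The intended values of T: cell_key j a b holds the cell y_j(a - b) of the orbit
  y_j = f^j(x), integer positions being differences of naturals so that neighbours are reached
  by Suc; window_key j a b t holds the code of the reversed list of the t cells of y_j from
  position a - b on, which grows by a cons, list_encode (c # cs) = Suc (prod_encode (c, list_encode cs));
  suffix_key i holds the code of the suffix from position i of the word w; and return_key n r
  holds a time j \<ge> n at which y_j agrees with y_0 on [-r, r].\<close>

locale orbit_certificate =
  fixes k \<rho> :: nat and F :: "nat list" and w :: nat and T :: "nat \<Rightarrow> nat"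
  assumes cell_shift: "T (cell_key j (Suc a) (Suc b)) = T (cell_key j a b)"
    and cell_less: "T (cell_key j a b) < k"
    and window_0: "T (window_key j a b 0) = 0"
    and window_Suc:
      "T (window_key j a b (Suc t)) = Suc (prod_encode (T (cell_key j (a + t) b), T (window_key j a b t)))"
    and window_rule: "prod_encode (T (window_key j a b (Suc (2 * \<rho>))), T (cell_key (Suc j) (a + \<rho>) b)) \<in> set F"
    and suffix_0: "T (suffix_key 0) = w"
    and suffix_Suc:
      "T (suffix_key i) = 0 \<or> T (suffix_key i) = Suc (prod_encode (T (cell_key 0 i 0), T (suffix_key (Suc i))))"
    and return_ge: "n \<le> T (return_key n r)"
    and return_agree: "a \<le> r \<Longrightarrow> b \<le> r \<Longrightarrow> T (cell_key (T (return_key n r)) a b) = T (cell_key 0 a b)"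

definition window :: "nat \<Rightarrow> (int \<Rightarrow> nat) \<Rightarrow> int \<Rightarrow> nat list" where
  "window \<rho> y i = map (\<lambda>s. y (i - int \<rho> + int s)) [0..<Suc (2 * \<rho>)]"

definition window_config :: "nat \<Rightarrow> nat list \<Rightarrow> int \<Rightarrow> nat" where
  "window_config \<rho> ws = (\<lambda>d. if \<bar>d\<bar> \<le> int \<rho> then ws ! nat (d + int \<rho>) else 0)"

definition rule_table :: "nat \<Rightarrow> nat \<Rightarrow> ((int \<Rightarrow> nat) \<Rightarrow> (int \<Rightarrow> nat)) \<Rightarrow> nat list" where
  "rule_table k \<rho> f = (SOME F. set F =
     (\<lambda>ws. prod_encode (list_encode (rev ws), f (window_config \<rho> ws) 0)) `
       {ws. set ws \<subseteq> {..<k} \<and> length ws = Suc (2 * \<rho>)})"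

lemma set_rule_table:
  "set (rule_table k \<rho> f) =
    (\<lambda>ws. prod_encode (list_encode (rev ws), f (window_config \<rho> ws) 0)) `
      {ws. set ws \<subseteq> {..<k} \<and> length ws = Suc (2 * \<rho>)}"
  unfolding rule_table_def by (rule someI_ex) (simp add: finite_list finite_lists_length_eq)

lemma window_config_window: "\<bar>d\<bar> \<le> int \<rho> \<Longrightarrow> window_config \<rho> (window \<rho> y i) d = y (i + d)"
proof -
  assume d: "\<bar>d\<bar> \<le> int \<rho>"
  then have "nat (d + int \<rho>) < Suc (2 * \<rho>)" "0 \<le> d + int \<rho>"
    by simp_all
  then show ?thesis
    using d by (simp add: window_config_def window_def del: upt_Suc)
qed

lemma window_eq_cells:
  "window \<rho> y (int (a + \<rho>) - int b) = map (\<lambda>s. y (int (a + s) - int b)) [0..<Suc (2 * \<rho>)]"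
  unfolding window_def by (simp add: algebra_simps del: upt_Suc)

lemma rule_table_window_iff:
  assumes ca: "cellular_automaton k f" and radius: "has_radius k f \<rho>" and y: "y \<in> full_shift k"
  shows "prod_encode (list_encode (rev (window \<rho> y i)), v) \<in> set (rule_table k \<rho> f) \<longleftrightarrow> v = f y i"
proof -
  have "y 0 < k"
    using y unfolding full_shift_def by blast
  have config: "window_config \<rho> ws \<in> full_shift k"
    if ws: "set ws \<subseteq> {..<k}" "length ws = Suc (2 * \<rho>)" for ws
  proof -
    have "ws ! nat (d + int \<rho>) < k" if "\<bar>d\<bar> \<le> int \<rho>" for d
    proof -
      have "nat (d + int \<rho>) < length ws"
        using that ws(2) by simp
      then show ?thesis
        using nth_mem ws(1) by blast
    qed
    then show ?thesis
      using \<open>y 0 < k\<close> by (simp add: window_config_def full_shift_def)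
  qed
  have window: "set (window \<rho> y i) \<subseteq> {..<k}" "length (window \<rho> y i) = Suc (2 * \<rho>)"
    using y by (auto simp: window_def full_shift_def)
  have "\<forall>d. \<bar>d\<bar> \<le> int \<rho> \<longrightarrow> window_config \<rho> (window \<rho> y i) (0 + d) = shift_by i y (0 + d)"
    by (simp add: window_config_window shift_by_def add.commute)
  then have "f (window_config \<rho> (window \<rho> y i)) 0 = f (shift_by i y) 0"
    using radius config[OF window] shift_by_in_full_shift[OF y] unfolding has_radius_def by blast
  also have "\<dots> = f y i"
    using cellular_automaton_apply[OF ca y] by simp
  finally have table_entry: "f (window_config \<rho> (window \<rho> y i)) 0 = f y i" .
  show ?thesis
  proof
    assume "prod_encode (list_encode (rev (window \<rho> y i)), v) \<in> set (rule_table k \<rho> f)"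
    then obtain ws where "prod_encode (list_encode (rev (window \<rho> y i)), v) =
        prod_encode (list_encode (rev ws), f (window_config \<rho> ws) 0)"
      unfolding set_rule_table image_iff by blast
    then have "ws = window \<rho> y i" and "v = f (window_config \<rho> ws) 0"
      by (simp_all add: list_encode_eq)
    then show "v = f y i"
      using table_entry by simp
  next
    assume "v = f y i"
    then show "prod_encode (list_encode (rev (window \<rho> y i)), v) \<in> set (rule_table k \<rho> f)"
      unfolding set_rule_table using window table_entry by (intro image_eqI[where x = "window \<rho> y i"]) simp_all
  qed
qed

definition certified_config :: "(nat \<Rightarrow> nat) \<Rightarrow> nat \<Rightarrow> int \<Rightarrow> nat" where
  "certified_config T j i = T (cell_key j (nat i) (nat (- i)))"

context orbit_certificate
begin

lemma certified_cell: "T (cell_key j a b) = certified_config T j (int a - int b)"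
proof -
  have shift: "T (cell_key j (a + c) (b + c)) = T (cell_key j a b)" for a b c
    by (induction c) (simp_all add: cell_shift)
  show ?thesis
  proof (cases "b \<le> a")
    case True
    then obtain c where a: "a = c + b"
      by (metis le_add_diff_inverse2)
    have "T (cell_key j (c + b) b) = T (cell_key j c 0)"
      using shift[of c b 0] by simp
    with a show ?thesis
      by (simp add: certified_config_def)
  next
    case False
    then obtain c where b: "b = c + a"
      by (metis le_add_diff_inverse2 nat_le_linear)
    have "T (cell_key j a (c + a)) = T (cell_key j 0 c)"
      using shift[of 0 a c] by simp
    with b show ?thesis
      by (simp add: certified_config_def)
  qed
qed

lemma certified_config_in_full_shift: "certified_config T j \<in> full_shift k"
  by (simp add: full_shift_def certified_config_def cell_less)

lemma certified_window:
  "T (window_key j a b t) = list_encode (rev (map (\<lambda>s. certified_config T j (int (a + s) - int b)) [0..<t]))"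
  by (induction t) (simp_all add: window_0 window_Suc certified_cell)

lemma certified_suffix: "\<exists>m. T (suffix_key i) = list_encode (map (\<lambda>s. certified_config T 0 (int (i + s))) [0..<m])"
proof (induction "T (suffix_key i)" arbitrary: i rule: less_induct)
  case less
  from suffix_Suc[of i] show ?case
  proof
    assume "T (suffix_key i) = 0"
    then show ?thesis
      by (intro exI[of _ 0]) simp
  next
    assume step: "T (suffix_key i) = Suc (prod_encode (T (cell_key 0 i 0), T (suffix_key (Suc i))))"
    then have "T (suffix_key (Suc i)) < T (suffix_key i)"
      using le_prod_encode_2 by (simp add: le_imp_less_Suc)
    then obtain m where "T (suffix_key (Suc i)) =
        list_encode (map (\<lambda>s. certified_config T 0 (int (Suc i + s))) [0..<m])"
      using less by blast
    moreover have "map (\<lambda>s. certified_config T 0 (int (i + s))) [0..<Suc m] =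
        certified_config T 0 (int i) # map (\<lambda>s. certified_config T 0 (int (Suc i + s))) [0..<m]"
      by (simp only: map_upt_Suc) simp
    ultimately show ?thesis
      using step certified_cell[of 0 i 0] by (intro exI[of _ "Suc m"]) simp
  qed
qed

lemma certified_config_step:
  assumes ca: "cellular_automaton k f" and radius: "has_radius k f \<rho>" and F: "F = rule_table k \<rho> f"
  shows "certified_config T (Suc j) = f (certified_config T j)"
proof
  fix i :: int
  define a where "a = nat (\<bar>i\<bar> + i)"
  define b where "b = nat \<bar>i\<bar> + \<rho>"
  have i: "int (a + \<rho>) - int b = i"
    unfolding a_def b_def by simp
  have "T (window_key j a b (Suc (2 * \<rho>))) = list_encode (rev (window \<rho> (certified_config T j) i))"
    unfolding certified_window window_eq_cells[of \<rho> "certified_config T j" a b, symmetric] i ..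
  moreover have "T (cell_key (Suc j) (a + \<rho>) b) = certified_config T (Suc j) i"
    unfolding certified_cell i ..
  ultimately show "certified_config T (Suc j) i = f (certified_config T j) i"
    using window_rule[of j a b] rule_table_window_iff[OF ca radius certified_config_in_full_shift] F by simp
qed

lemma certified_orbit:
  assumes "cellular_automaton k f" and "has_radius k f \<rho>" and "F = rule_table k \<rho> f"
  shows "certified_config T j = (f ^^ j) (certified_config T 0)"
  by (induction j) (simp_all add: certified_config_step[OF assms])

lemma certified_config_nonwandering:
  assumes "cellular_automaton k f" and "has_radius k f \<rho>" and "F = rule_table k \<rho> f"
  shows "certified_config T 0 \<in> nonwandering k f"
  unfolding nonwandering_iff
proof (intro conjI allI)
  show "certified_config T 0 \<in> full_shift k"
    by (rule certified_config_in_full_shift)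
  fix n r
  let ?j = "T (return_key n r)"
  have "(f ^^ ?j) (certified_config T 0) d = certified_config T 0 d" if "\<bar>d\<bar> \<le> int r" for d
  proof -
    have "nat d \<le> r" "nat (- d) \<le> r"
      using that by simp_all
    then have "certified_config T ?j d = certified_config T 0 d"
      using return_agree unfolding certified_config_def by blast
    then show ?thesis
      using certified_orbit[OF assms, of ?j] by simp
  qed
  then show "\<exists>j\<ge>n. \<forall>d. \<bar>d\<bar> \<le> int r \<longrightarrow> (f ^^ j) (certified_config T 0) d = certified_config T 0 d"
    using return_ge by blast
qed

end

lemma language_code_of_certificate:
  assumes ca: "cellular_automaton k f" and radius: "has_radius k f \<rho>"
    and "orbit_certificate k \<rho> (rule_table k \<rho> f) w T"
  shows "w \<in> language_code (nonwandering k f)"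
proof -
  interpret orbit_certificate k \<rho> "rule_table k \<rho> f" w T by fact
  obtain m where "w = list_encode (map (\<lambda>s. certified_config T 0 (int s)) [0..<m])"
    using certified_suffix[of 0] suffix_0 by auto
  then show ?thesis
    using certified_config_nonwandering[OF ca radius refl]
    unfolding language_code_def language_def by blast
qed

lemma certificate_of_nonwandering:
  assumes ca: "cellular_automaton k f" and radius: "has_radius k f \<rho>" and x: "x \<in> nonwandering k f"
  shows "\<exists>T. orbit_certificate k \<rho> (rule_table k \<rho> f) (list_encode (map (\<lambda>i. x (int i)) [0..<m])) T"
proof -
  define y where "y j = (f ^^ j) x" for j
  have x_full: "x \<in> full_shift k"
    using x unfolding nonwandering_iff by blast
  have y: "y j \<in> full_shift k" for j
  proof (induction j)
    case (Suc j)
    then show ?case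
      using ca unfolding y_def cellular_automaton_def by auto
  qed (simp add: y_def x_full)
  have "\<forall>n r. \<exists>j. n \<le> j \<and> (\<forall>d. \<bar>d\<bar> \<le> int r \<longrightarrow> y j d = x d)"
    using x unfolding nonwandering_iff y_def by blast
  then obtain ret where ret: "\<And>n r. n \<le> ret n r" "\<And>n r d. \<bar>d\<bar> \<le> int r \<Longrightarrow> y (ret n r) d = x d"
    by metis
  define ws where "ws = map (\<lambda>i. x (int i)) [0..<m]"
  define T where "T key =
    (if arg 0 key = 0 then y (arg 1 key) (int (arg 2 key) - int (arg 3 key))
     else if arg 0 key = 1 then
       list_encode (rev (map (\<lambda>s. y (arg 1 key) (int (arg 2 key + s) - int (arg 3 key))) [0..<arg 4 key]))
     else if arg 0 key = 2 then list_encode (drop (arg 1 key) ws)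
     else ret (arg 1 key) (arg 2 key))" for key
  have T_cell: "T (cell_key j a b) = y j (int a - int b)" for j a b
    by (simp add: T_def cell_key_def)
  have T_window: "T (window_key j a b t) = list_encode (rev (map (\<lambda>s. y j (int (a + s) - int b)) [0..<t]))"
    for j a b t
    by (simp add: T_def window_key_def)
  have T_suffix: "T (suffix_key i) = list_encode (drop i ws)" for i
    by (simp add: T_def suffix_key_def)
  have T_return: "T (return_key n r) = ret n r" for n r
    by (simp add: T_def return_key_def)
  have "orbit_certificate k \<rho> (rule_table k \<rho> f) (list_encode ws) T"
  proof
    fix j a b t i n r
    show "T (cell_key j (Suc a) (Suc b)) = T (cell_key j a b)"
      by (simp add: T_cell)
    show "T (cell_key j a b) < k"
      using y unfolding T_cell full_shift_def by blast
    show "T (window_key j a b 0) = 0"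
      by (simp add: T_window)
    show "T (window_key j a b (Suc t)) = Suc (prod_encode (T (cell_key j (a + t) b), T (window_key j a b t)))"
      by (simp add: T_window T_cell)
    have "T (window_key j a b (Suc (2 * \<rho>))) = list_encode (rev (window \<rho> (y j) (int (a + \<rho>) - int b)))"
      unfolding T_window window_eq_cells ..
    moreover have "T (cell_key (Suc j) (a + \<rho>) b) = f (y j) (int (a + \<rho>) - int b)"
      by (simp add: T_cell y_def)
    ultimately show "prod_encode (T (window_key j a b (Suc (2 * \<rho>))), T (cell_key (Suc j) (a + \<rho>) b))
        \<in> set (rule_table k \<rho> f)"
      using rule_table_window_iff[OF ca radius y] by simp
    show "T (suffix_key 0) = list_encode ws"
      by (simp add: T_suffix)
    show "T (suffix_key i) = 0 \<or> T (suffix_key i) = Suc (prod_encode (T (cell_key 0 i 0), T (suffix_key (Suc i))))"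
    proof (cases "i < length ws")
      case True
      then have "drop i ws = x (int i) # drop (Suc i) ws"
        unfolding ws_def by (simp add: Cons_nth_drop_Suc[symmetric])
      then show ?thesis
        by (simp add: T_suffix T_cell y_def)
    qed (simp add: T_suffix)
    show "n \<le> T (return_key n r)"
      by (simp add: T_return ret)
    show "T (cell_key (T (return_key n r)) a b) = T (cell_key 0 a b)" if "a \<le> r" "b \<le> r"
      using that ret(2)[of "int a - int b" r n] by (simp add: T_cell T_return y_def)
  qed
  then show ?thesis
    unfolding ws_def by blast
qed

lemma language_code_nonwandering_iff:
  assumes "cellular_automaton k f" and "has_radius k f \<rho>"
  shows "w \<in> language_code (nonwandering k f) \<longleftrightarrow> (\<exists>T. orbit_certificate k \<rho> (rule_table k \<rho> f) w T)"
proof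
  assume "w \<in> language_code (nonwandering k f)"
  then obtain x m where "x \<in> nonwandering k f" "w = list_encode (map (\<lambda>i. x (int i)) [0..<m])"
    unfolding language_code_def language_def by blast
  then show "\<exists>T. orbit_certificate k \<rho> (rule_table k \<rho> f) w T"
    using certificate_of_nonwandering[OF assms] by blast
qed (use language_code_of_certificate[OF assms] in blast)

section \<open>The arithmetical matrix\<close>

definition maps_to :: "nat set \<Rightarrow> nat \<Rightarrow> nat \<Rightarrow> bool" where
  "maps_to C x v \<longleftrightarrow> prod_encode (x, v) \<in> C"

text \<open>The first component of m selects one of eight checks, its other components are
  the arguments, and l names the values of the function coded by C that the check needs.
  Checks 0 and 1 say that C is the graph of a total function, checks 2 to 7 are the axioms
  of an orbit certificate.\<close>

definition certificate_matrix :: "nat \<Rightarrow> nat \<Rightarrow> nat list \<Rightarrow> nat set \<Rightarrow> nat \<Rightarrow> nat \<Rightarrow> nat \<Rightarrow> bool" where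
  "certificate_matrix k \<rho> F C m l w \<longleftrightarrow>
    (let x = arg 1 m; y = arg 2 m; z = arg 3 m; u = arg 4 m; v = arg 0 l; v' = arg 1 l in
      (arg 0 m = 0 \<longrightarrow> maps_to C x y \<and> maps_to C x z \<longrightarrow> y = z) \<and>
      (arg 0 m = 1 \<longrightarrow> maps_to C x l) \<and>
      (arg 0 m = 2 \<longrightarrow> maps_to C (cell_key x y z) l \<and> maps_to C (cell_key x (Suc y) (Suc z)) l \<and> l < k) \<and>
      (arg 0 m = 3 \<longrightarrow> maps_to C (window_key x y z 0) 0) \<and>
      (arg 0 m = 4 \<longrightarrow> maps_to C (cell_key x (y + u) z) v \<and> maps_to C (window_key x y z u) v' \<and>
         maps_to C (window_key x y z (Suc u)) (Suc (prod_encode (v, v')))) \<and>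
      (arg 0 m = 5 \<longrightarrow> maps_to C (window_key x y z (Suc (2 * \<rho>))) v \<and>
         maps_to C (cell_key (Suc x) (y + \<rho>) z) v' \<and> prod_encode (v, v') \<in> set F) \<and>
      (arg 0 m = 6 \<longrightarrow> maps_to C (suffix_key 0) w \<and> maps_to C (cell_key 0 x 0) v \<and>
         maps_to C (suffix_key (Suc x)) v' \<and>
         (maps_to C (suffix_key x) 0 \<or> maps_to C (suffix_key x) (Suc (prod_encode (v, v'))))) \<and>
      (arg 0 m = 7 \<longrightarrow> maps_to C (return_key x y) v \<and> x \<le> v \<and>
         (z \<le> y \<and> u \<le> y \<longrightarrow> maps_to C (cell_key v z u) v' \<and> maps_to C (cell_key 0 z u) v')))"

lemma certificate_of_matrix:
  assumes "\<And>m. \<exists>l. certificate_matrix k \<rho> F C m l w"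
  shows "orbit_certificate k \<rho> F w (\<lambda>x. THE v. maps_to C x v)"
proof -
  define T where "T x = (THE v. maps_to C x v)" for x
  have matrix: "\<exists>l. certificate_matrix k \<rho> F C (tuple (t # xs)) l w" for t xs
    using assms by blast
  have "\<exists>!v. maps_to C x v" for x
  proof -
    have "maps_to C x v \<Longrightarrow> maps_to C x v' \<Longrightarrow> v = v'" for v v'
      using matrix[of 0 "[x, v, v']"] by (simp add: certificate_matrix_def)
    moreover have "\<exists>v. maps_to C x v"
      using matrix[of 1 "[x]"] by (auto simp: certificate_matrix_def)
    ultimately show ?thesis by blast
  qed
  then have maps_to_T: "maps_to C x v \<longleftrightarrow> T x = v" for x v
    unfolding T_def by (metis theI')
  have "orbit_certificate k \<rho> F w T"
  proof
    fix j a b t i n r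
    show "T (cell_key j (Suc a) (Suc b)) = T (cell_key j a b)" "T (cell_key j a b) < k"
      using matrix[of 2 "[j, a, b]"] by (auto simp: certificate_matrix_def Let_def maps_to_T)
    show "T (window_key j a b 0) = 0"
      using matrix[of 3 "[j, a, b]"] by (auto simp: certificate_matrix_def Let_def maps_to_T)
    show "T (window_key j a b (Suc t)) =
        Suc (prod_encode (T (cell_key j (a + t) b), T (window_key j a b t)))"
      using matrix[of 4 "[j, a, b, t]"] by (auto simp: certificate_matrix_def Let_def maps_to_T)
    show "prod_encode (T (window_key j a b (Suc (2 * \<rho>))), T (cell_key (Suc j) (a + \<rho>) b)) \<in> set F"
      using matrix[of 5 "[j, a, b]"] by (auto simp: certificate_matrix_def Let_def maps_to_T)
    show "T (suffix_key 0) = w"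
      using matrix[of 6 "[0]"] by (auto simp: certificate_matrix_def Let_def maps_to_T)
    show "T (suffix_key i) = 0 \<or>
        T (suffix_key i) = Suc (prod_encode (T (cell_key 0 i 0), T (suffix_key (Suc i))))"
      using matrix[of 6 "[i]"] by (auto simp: certificate_matrix_def Let_def maps_to_T)
    show "n \<le> T (return_key n r)"
      using matrix[of 7 "[n, r, 0, 0]"] by (auto simp: certificate_matrix_def Let_def maps_to_T)
    show "T (cell_key (T (return_key n r)) a b) = T (cell_key 0 a b)" if "a \<le> r" "b \<le> r"
      using matrix[of 7 "[n, r, a, b]"] that by (auto simp: certificate_matrix_def Let_def maps_to_T)
  qed
  then show ?thesis unfolding T_def .
qed

definition graph :: "(nat \<Rightarrow> nat) \<Rightarrow> nat set" where
  "graph T = range (\<lambda>x. prod_encode (x, T x))"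

lemma maps_to_graph [simp]: "maps_to (graph T) x v \<longleftrightarrow> T x = v"
  by (auto simp: maps_to_def graph_def)

lemma matrix_of_certificate:
  assumes "orbit_certificate k \<rho> F w T"
  shows "\<exists>l. certificate_matrix k \<rho> F (graph T) m l w"
proof -
  interpret orbit_certificate k \<rho> F w T by fact
  let ?x = "arg 1 m" and ?y = "arg 2 m" and ?z = "arg 3 m" and ?u = "arg 4 m"
  let ?l = "if arg 0 m = 1 then T ?x
    else if arg 0 m = 2 then T (cell_key ?x ?y ?z)
    else if arg 0 m = 4 then tuple [T (cell_key ?x (?y + ?u) ?z), T (window_key ?x ?y ?z ?u)]
    else if arg 0 m = 5 then tuple [T (window_key ?x ?y ?z (Suc (2 * \<rho>))), T (cell_key (Suc ?x) (?y + \<rho>) ?z)]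
    else if arg 0 m = 6 then tuple [T (cell_key 0 ?x 0), T (suffix_key (Suc ?x))]
    else tuple [T (return_key ?x ?y), T (cell_key 0 ?z ?u)]"
  have "certificate_matrix k \<rho> F (graph T) m ?l w"
    unfolding certificate_matrix_def Let_def
    using cell_shift cell_less window_0 window_Suc window_rule suffix_0 suffix_Suc return_ge return_agree
    by auto
  then show ?thesis ..
qed

lemma ex_certificate_matrix_iff:
  "(\<exists>C. \<forall>m. \<exists>l. certificate_matrix k \<rho> F C m l w) \<longleftrightarrow> (\<exists>T. orbit_certificate k \<rho> F w T)"
  using certificate_of_matrix matrix_of_certificate by blast

definition MapsToP :: "recf \<Rightarrow> recf \<Rightarrow> recf" where
  "MapsToP a b = MemP (PairP a b)"

definition CellKeyP :: "recf \<Rightarrow> recf \<Rightarrow> recf \<Rightarrow> recf" where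
  "CellKeyP j a b = TupleP [ConstP 0, j, a, b]"

definition WindowKeyP :: "recf \<Rightarrow> recf \<Rightarrow> recf \<Rightarrow> recf \<Rightarrow> recf" where
  "WindowKeyP j a b t = TupleP [ConstP 1, j, a, b, t]"

definition SuffixKeyP :: "recf \<Rightarrow> recf" where
  "SuffixKeyP i = TupleP [ConstP 2, i]"

definition ReturnKeyP :: "recf \<Rightarrow> recf \<Rightarrow> recf" where
  "ReturnKeyP n r = TupleP [ConstP 3, n, r]"

lemma decides_MapsToP:
  "computes n a ga \<Longrightarrow> computes n b gb \<Longrightarrow> decides n (MapsToP a b) (\<lambda>C xs. maps_to C (ga C xs) (gb C xs))"
  unfolding MapsToP_def maps_to_def by (intro decides_MemP computes_PairP)

lemma computes_CellKeyP:
  "computes n j gj \<Longrightarrow> computes n a ga \<Longrightarrow> computes n b gb \<Longrightarrow>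
   computes n (CellKeyP j a b) (\<lambda>C xs. cell_key (gj C xs) (ga C xs) (gb C xs))"
  unfolding CellKeyP_def cell_key_def by (intro computes_TupleP_Cons computes_TupleP_Nil computes_ConstP)

lemma computes_WindowKeyP:
  "computes n j gj \<Longrightarrow> computes n a ga \<Longrightarrow> computes n b gb \<Longrightarrow> computes n t gt \<Longrightarrow>
   computes n (WindowKeyP j a b t) (\<lambda>C xs. window_key (gj C xs) (ga C xs) (gb C xs) (gt C xs))"
  unfolding WindowKeyP_def window_key_def by (intro computes_TupleP_Cons computes_TupleP_Nil computes_ConstP)

lemma computes_SuffixKeyP:
  "computes n i g \<Longrightarrow> computes n (SuffixKeyP i) (\<lambda>C xs. suffix_key (g C xs))"
  unfolding SuffixKeyP_def suffix_key_def by (intro computes_TupleP_Cons computes_TupleP_Nil computes_ConstP)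

lemma computes_ReturnKeyP:
  "computes n a ga \<Longrightarrow> computes n b gb \<Longrightarrow>
   computes n (ReturnKeyP a b) (\<lambda>C xs. return_key (ga C xs) (gb C xs))"
  unfolding ReturnKeyP_def return_key_def by (intro computes_TupleP_Cons computes_TupleP_Nil computes_ConstP)

definition certificate_matrix_rec :: "nat \<Rightarrow> nat \<Rightarrow> nat list \<Rightarrow> recf" where
  "certificate_matrix_rec k \<rho> F =
    (let M = Proj 0; L = Proj 1; W = Proj 2;
      X = ArgP 1 M; Y = ArgP 2 M; Z = ArgP 3 M; U = ArgP 4 M; V = ArgP 0 L; V' = ArgP 1 L;
      tag = \<lambda>i P. ImpP (EqP (ArgP 0 M) (ConstP i)) P in
    AndP (tag 0 (ImpP (AndP (MapsToP X Y) (MapsToP X Z)) (EqP Y Z)))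
   (AndP (tag 1 (MapsToP X L))
   (AndP (tag 2 (AndP (MapsToP (CellKeyP X Y Z) L)
      (AndP (MapsToP (CellKeyP X (SucP Y) (SucP Z)) L) (LeP (SucP L) (ConstP k)))))
   (AndP (tag 3 (MapsToP (WindowKeyP X Y Z (ConstP 0)) (ConstP 0)))
   (AndP (tag 4 (AndP (MapsToP (CellKeyP X (AddP Y U) Z) V)
      (AndP (MapsToP (WindowKeyP X Y Z U) V') (MapsToP (WindowKeyP X Y Z (SucP U)) (SucP (PairP V V'))))))
   (AndP (tag 5 (AndP (MapsToP (WindowKeyP X Y Z (ConstP (Suc (2 * \<rho>)))) V)
      (AndP (MapsToP (CellKeyP (SucP X) (AddP Y (ConstP \<rho>)) Z) V') (InListP F (PairP V V')))))
   (AndP (tag 6 (AndP (MapsToP (SuffixKeyP (ConstP 0)) W)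
      (AndP (MapsToP (CellKeyP (ConstP 0) X (ConstP 0)) V) (AndP (MapsToP (SuffixKeyP (SucP X)) V')
      (OrP (MapsToP (SuffixKeyP X) (ConstP 0)) (MapsToP (SuffixKeyP X) (SucP (PairP V V'))))))))
   (tag 7 (AndP (MapsToP (ReturnKeyP X Y) V) (AndP (LeP X V)
      (ImpP (AndP (LeP Z Y) (LeP U Y)) (AndP (MapsToP (CellKeyP V Z U) V') (MapsToP (CellKeyP (ConstP 0) Z U) V')))))))))))))"

lemma decides_certificate_matrix_rec:
  "decides 3 (certificate_matrix_rec k \<rho> F) (\<lambda>C xs. certificate_matrix k \<rho> F C (xs ! 0) (xs ! 1) (xs ! 2))"
proof -
  have inputs: "computes 3 (Proj 0) (\<lambda>C xs. xs ! 0)" "computes 3 (Proj 1) (\<lambda>C xs. xs ! 1)"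
    "computes 3 (Proj 2) (\<lambda>C xs. xs ! 2)"
    by (simp_all add: computes_Proj)
  show ?thesis
    unfolding certificate_matrix_rec_def Let_def
    by (rule decides_cong,
        (rule decides_AndP decides_ImpP decides_OrP decides_EqP decides_LeP decides_MapsToP decides_InListP
          computes_ArgP computes_ConstP computes_SucP computes_AddP computes_PairP computes_CellKeyP
          computes_WindowKeyP computes_SuffixKeyP computes_ReturnKeyP inputs)+)
      (simp add: certificate_matrix_def Let_def Suc_le_eq)
qed

lemma recursive_certificate_matrix: "recursive_pred (certificate_matrix k \<rho> F)"
  by (rule decides_imp_recursive_pred[OF decides_certificate_matrix_rec])

theorem lemma3:
  fixes k :: nat and f :: "(int \<Rightarrow> nat) \<Rightarrow> (int \<Rightarrow> nat)"
  assumes "cellular_automaton k f"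
  shows "sigma11 (language_code (nonwandering k f))"
proof -
  obtain \<rho> where radius: "has_radius k f \<rho>"
    using cellular_automaton_has_radius[OF assms] by blast
  have "w \<in> language_code (nonwandering k f) \<longleftrightarrow>
      (\<exists>C. \<forall>m. \<exists>l. certificate_matrix k \<rho> (rule_table k \<rho> f) C m l w)" for w
    unfolding ex_certificate_matrix_iff language_code_nonwandering_iff[OF assms radius] ..
  then show ?thesis
    unfolding sigma11_def using recursive_certificate_matrix by blast
qed

end
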